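(* Let $L:\mathbb{R}^k\to\mathbb{R}^m$ be a minimal linear map such that $|S(L_i)|>1$ for all $i\in[m]$, $|S(L)|=k\geq 8$, and $t(L)>2^{k-1}$. Then the shape of $L$ is either a (2,1)-star or a (3,2)-star.
   Context: Let $\mathbb{H}^n=\{0,1\}^n$, and $e_1,\dots,e_k$ the standard basis of $\mathbb{R}^k$. For a linear map $L:\mathbb{R}^k\to\mathbb{R}^m$, set $I(L)=L^{-1}(\mathbb{H}^m)\cap\mathbb{H}^k$ and $t(L)=|I(L)|$. The support is $S(L)=\{i\in[k]: L(e_i)\neq 0\}$. For $i\in[m]$, $L_i=\pi_i\circ L:\mathbb{R}^k\to\mathbb{R}$ is the $i$-th coordinate of $L$. $L$ is called minimal if for every $i\in[m]$ we have $S(L_i)\not\subseteq\bigcup_{j\neq i}S(L_j)$ and $t(L_i)<2^k$. The shape of $L$ is the hypergraph with vertex set $\{1,\dots,k\}$ and edge set $\{S(L_i): i\in[m]\}$. A (2,1)-star is a 2-uniform hypergraph $(V,E)$ with a vertex $c\in V$ such that $E=\{\{c,v\}: v\in V\setminus\{c\}\}$. A (3,2)-star is a 3-uniform hypergraph $(V,E)$ with distinct $c_1,c_2\in V$ such that $E=\{\{c_1,c_2,v\}: v\in V\setminus\{c_1,c_2\}\}$. *)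

theory Defs
  imports "HOL-Analysis.Analysis"
begin

text \<open>Linear maps R^k -> R^m are modelled as linear functions real^'k => real^'m;
  the coordinate index sets [k], [m] are the finite types 'k, 'm.\<close>

definition Hcube :: "(real^'n::finite) set" where
  "Hcube = {x. \<forall>i. x $ i = 0 \<or> x $ i = 1}"

definition I_map :: "(real^'k::finite \<Rightarrow> real^'m::finite) \<Rightarrow> (real^'k) set" where
  "I_map L = {x \<in> Hcube. L x \<in> Hcube}"

definition t_map :: "(real^'k::finite \<Rightarrow> real^'m::finite) \<Rightarrow> nat" where
  "t_map L = card (I_map L)"

text \<open>For a scalar map (target R = R^1), H^1 = {0,1}.\<close>
definition I_scalar :: "(real^'k::finite \<Rightarrow> real) \<Rightarrow> (real^'k) set" where
  "I_scalar f = {x \<in> Hcube. f x = 0 \<or> f x = 1}"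

definition t_scalar :: "(real^'k::finite \<Rightarrow> real) \<Rightarrow> nat" where
  "t_scalar f = card (I_scalar f)"

definition supp_map :: "(real^'k::finite \<Rightarrow> real^'m::finite) \<Rightarrow> 'k set" where
  "supp_map L = {j. L (axis j 1) \<noteq> 0}"

definition supp_scalar :: "(real^'k::finite \<Rightarrow> real) \<Rightarrow> 'k set" where
  "supp_scalar f = {j. f (axis j 1) \<noteq> 0}"

definition coord :: "(real^'k::finite \<Rightarrow> real^'m::finite) \<Rightarrow> 'm \<Rightarrow> (real^'k \<Rightarrow> real)" where
  "coord L i = (\<lambda>x. L x $ i)"

definition minimal_map :: "(real^'k::finite \<Rightarrow> real^'m::finite) \<Rightarrow> bool" where
  "minimal_map L \<longleftrightarrow> (\<forall>i. \<not> supp_scalar (coord L i) \<subseteq> (\<Union>j\<in>{j. j \<noteq> i}. supp_scalar (coord L j))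
                        \<and> t_scalar (coord L i) < 2 ^ CARD('k))"

text \<open>Shape: hypergraph on vertex set UNIV::'k with edge set {S(L_i) | i}.\<close>
definition shape_edges :: "(real^'k::finite \<Rightarrow> real^'m::finite) \<Rightarrow> 'k set set" where
  "shape_edges L = range (\<lambda>i. supp_scalar (coord L i))"

definition star21 :: "'a set \<Rightarrow> 'a set set \<Rightarrow> bool" where
  "star21 V E \<longleftrightarrow> (\<exists>c\<in>V. E = {{c, v} | v. v \<in> V - {c}})"

definition star32 :: "'a set \<Rightarrow> 'a set set \<Rightarrow> bool" where
  "star32 V E \<longleftrightarrow> (\<exists>c1\<in>V. \<exists>c2\<in>V. c1 \<noteq> c2 \<and> E = {{c1, c2, v} | v. v \<in> V - {c1, c2}})"

end

theory Submission
  imports Defs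
begin

(*
  Write L as its coefficient matrix a (a i j = L(e_j)_i), so that t(L) counts the sets X of
  columns all of whose row sums lie in {0, 1}. Fixing the part of X outside a set D of columns
  turns every row into an offset; if for some rows R every choice of offsets leaves at most half
  of the subsets of D admissible for the rows in R, then t(L) <= 2^(k-1).

  Such a block exists unless the shape is a star: take an entry outside {0, 1, -1}; or the rows
  themselves when their supports are pairwise disjoint (a +-1 row on n columns admits at most two
  consecutive levels of the cube, i.e. at most binom(n+1, (n+1) div 2) subsets); or two shared
  columns lying in different sets of rows; or a shared column missing some row. Once every shared
  column lies in every row, two rows together with one private column rule out three shared
  columns and rows with several private columns. One or two shared columns plus exactly one
  private column per row is a (2,1)- or a (3,2)-star.
*)

section \<open>Counting 0/1 solutions through blocks of columns\<close>

definition row_sum :: "('m \<Rightarrow> 'k \<Rightarrow> real) \<Rightarrow> 'm \<Rightarrow> 'k set \<Rightarrow> real" where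
  "row_sum a i X = (\<Sum>j\<in>X. a i j)"

definition zero_one_solutions :: "('m \<Rightarrow> 'k \<Rightarrow> real) \<Rightarrow> 'k set set" where
  "zero_one_solutions a = {X. \<forall>i. row_sum a i X \<in> {0, 1}}"

definition block_count :: "('m \<Rightarrow> 'k \<Rightarrow> real) \<Rightarrow> 'k set \<Rightarrow> 'm set \<Rightarrow> ('m \<Rightarrow> real) \<Rightarrow> nat" where
  "block_count a D R c = card {W \<in> Pow D. \<forall>r\<in>R. c r + row_sum a r W \<in> {0, 1}}"

definition row_count :: "('m \<Rightarrow> 'k \<Rightarrow> real) \<Rightarrow> 'm \<Rightarrow> 'k set \<Rightarrow> real \<Rightarrow> nat" where
  "row_count a r S x = card {W \<in> Pow S. x + row_sum a r W \<in> {0, 1}}"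

(* The offset c r stands for the contribution of the columns outside D to row r. *)
definition half_block :: "('m \<Rightarrow> 'k \<Rightarrow> real) \<Rightarrow> 'k set \<Rightarrow> 'm set \<Rightarrow> bool" where
  "half_block a D R \<longleftrightarrow> (\<forall>c. 2 * block_count a D R c \<le> 2 ^ card D)"

lemma row_sum_empty [simp]: "row_sum a r {} = 0"
  by (simp add: row_sum_def)

lemma row_sum_singleton [simp]: "row_sum a r {j} = a r j"
  by (simp add: row_sum_def)

lemma row_sum_Un_disjoint:
  "finite X \<Longrightarrow> finite Y \<Longrightarrow> X \<inter> Y = {} \<Longrightarrow> row_sum a r (X \<union> Y) = row_sum a r X + row_sum a r Y"
  unfolding row_sum_def by (rule sum.union_disjoint)

lemma row_sum_restrict:
  "finite Y \<Longrightarrow> (\<And>j. j \<in> Y - S \<Longrightarrow> a r j = 0) \<Longrightarrow> row_sum a r Y = row_sum a r (Y \<inter> S)"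
  unfolding row_sum_def by (rule sum.mono_neutral_cong_right) auto

lemma row_sum_sym_diff:
  fixes a :: "'m \<Rightarrow> 'k::finite \<Rightarrow> real"
  shows "row_sum a r (sym_diff z d) = row_sum a r z + (\<Sum>j\<in>d. if j \<in> z then - a r j else a r j)"
proof -
  have "row_sum a r (sym_diff z d) = row_sum a r (z - d) + row_sum a r (d - z)"
    by (rule row_sum_Un_disjoint) auto
  moreover have "row_sum a r z = row_sum a r (z - d) + row_sum a r (d \<inter> z)"
  proof -
    have "row_sum a r ((z - d) \<union> (d \<inter> z)) = row_sum a r (z - d) + row_sum a r (d \<inter> z)"
      by (rule row_sum_Un_disjoint) auto
    moreover have "(z - d) \<union> (d \<inter> z) = z"
      by blast
    ultimately show ?thesis
      by simp
  qed
  moreover have "(\<Sum>j\<in>d. if j \<in> z then - a r j else a r j) = - row_sum a r (d \<inter> z) + row_sum a r (d - z)"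
    by (simp add: sum.If_cases row_sum_def sum_negf Diff_eq)
  ultimately show ?thesis
    by simp
qed

lemma card_Pow_Un_disjoint:
  assumes "finite B" "finite U" "B \<inter> U = {}"
  shows "card {X \<in> Pow (B \<union> U). P X} = (\<Sum>z\<in>Pow B. card {w \<in> Pow U. P (z \<union> w)})"
proof -
  have recombine: "X \<inter> B \<union> X \<inter> U = X" if "X \<subseteq> B \<union> U" for X
    using that by blast
  have "bij_betw (\<lambda>(z, w). z \<union> w) (SIGMA z:Pow B. {w \<in> Pow U. P (z \<union> w)}) {X \<in> Pow (B \<union> U). P X}"
    by (rule bij_betw_byWitness[where f' = "\<lambda>X. (X \<inter> B, X \<inter> U)"]) (use assms(3) recombine in auto)
  then have "card {X \<in> Pow (B \<union> U). P X} = card (SIGMA z:Pow B. {w \<in> Pow U. P (z \<union> w)})"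
    by (simp add: bij_betw_same_card)
  then show ?thesis
    using assms(1,2) by simp
qed

lemma card_Pow_UNION_disjoint_family:
  assumes "finite R" "\<And>r. r \<in> R \<Longrightarrow> finite (W r)" "disjoint_family_on W R"
  shows "card {w \<in> Pow (\<Union>r\<in>R. W r). \<forall>r\<in>R. P r (w \<inter> W r)} = (\<Prod>r\<in>R. card {w \<in> Pow (W r). P r w})"
proof -
  have "bij_betw (\<lambda>w. \<lambda>r\<in>R. w \<inter> W r) {w \<in> Pow (\<Union>r\<in>R. W r). \<forall>r\<in>R. P r (w \<inter> W r)}
      (\<Pi>\<^sub>E r\<in>R. {w \<in> Pow (W r). P r w})"
  proof (rule bij_betw_byWitness[where f' = "\<lambda>f. \<Union>r\<in>R. f r"])
    have piece: "(\<Union>s\<in>R. f s) \<inter> W r = f r" if "f \<in> (\<Pi>\<^sub>E r\<in>R. {w \<in> Pow (W r). P r w})" "r \<in> R" for f r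
      using that assms(3) by (fastforce simp: disjoint_family_on_def PiE_iff)
    show "\<forall>f \<in> \<Pi>\<^sub>E r\<in>R. {w \<in> Pow (W r). P r w}. (\<lambda>r\<in>R. (\<Union>s\<in>R. f s) \<inter> W r) = f"
      using piece by (auto simp: PiE_iff extensional_def restrict_def fun_eq_iff)
    show "(\<lambda>f. \<Union>r\<in>R. f r) ` (\<Pi>\<^sub>E r\<in>R. {w \<in> Pow (W r). P r w})
        \<subseteq> {w \<in> Pow (\<Union>r\<in>R. W r). \<forall>r\<in>R. P r (w \<inter> W r)}"
      using piece by (fastforce simp: PiE_iff)
  qed auto
  then show ?thesis
    using assms(1) by (simp add: bij_betw_same_card card_PiE)
qed

lemma block_count_product:
  fixes a :: "'m::finite \<Rightarrow> 'k::finite \<Rightarrow> real"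
  assumes disj: "disjoint_family_on W R"
    and B: "\<And>r. r \<in> R \<Longrightarrow> B \<inter> W r = {}"
    and vanish: "\<And>r s j. r \<in> R \<Longrightarrow> s \<in> R \<Longrightarrow> s \<noteq> r \<Longrightarrow> j \<in> W s \<Longrightarrow> a r j = 0"
  shows "block_count a (B \<union> (\<Union>r\<in>R. W r)) R c
    = (\<Sum>z\<in>Pow B. \<Prod>r\<in>R. row_count a r (W r) (c r + row_sum a r z))"
proof -
  let ?U = "\<Union>r\<in>R. W r"
  have "block_count a (B \<union> ?U) R c
      = (\<Sum>z\<in>Pow B. card {w \<in> Pow ?U. \<forall>r\<in>R. c r + row_sum a r (z \<union> w) \<in> {0, 1}})"
    unfolding block_count_def by (rule card_Pow_Un_disjoint) (use B in auto)
  also have "\<dots> = (\<Sum>z\<in>Pow B. card {w \<in> Pow ?U. \<forall>r\<in>R. (c r + row_sum a r z) + row_sum a r (w \<inter> W r) \<in> {0, 1}})"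
  proof (intro sum.cong refl arg_cong[where f = card] Collect_cong conj_cong ball_cong)
    fix z w r assume z: "z \<in> Pow B" and w: "w \<in> Pow ?U" and r: "r \<in> R"
    have "row_sum a r (z \<union> w) = row_sum a r z + row_sum a r w"
      using z w B by (intro row_sum_Un_disjoint) auto
    also have "row_sum a r w = row_sum a r (w \<inter> W r)"
      using w r vanish by (intro row_sum_restrict) auto
    finally show "c r + row_sum a r (z \<union> w) \<in> {0, 1} \<longleftrightarrow> (c r + row_sum a r z) + row_sum a r (w \<inter> W r) \<in> {0, 1}"
      by (simp add: add.assoc)
  qed
  also have "\<dots> = (\<Sum>z\<in>Pow B. \<Prod>r\<in>R. row_count a r (W r) (c r + row_sum a r z))"
    unfolding row_count_def using disj by (subst card_Pow_UNION_disjoint_family) auto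
  finally show ?thesis .
qed

lemma card_zero_one_solutions_le_half:
  fixes a :: "'m::finite \<Rightarrow> 'k::finite \<Rightarrow> real"
  assumes "half_block a D R"
  shows "2 * card (zero_one_solutions a) \<le> 2 ^ CARD('k)"
proof -
  have "zero_one_solutions a = {X \<in> Pow (- D \<union> D). \<forall>i. row_sum a i X \<in> {0, 1}}"
    by (simp add: zero_one_solutions_def)
  then have "card (zero_one_solutions a)
      = (\<Sum>Y\<in>Pow (- D). card {W \<in> Pow D. \<forall>i. row_sum a i (Y \<union> W) \<in> {0, 1}})"
    by (simp only: card_Pow_Un_disjoint[of "- D" D] finite Compl_disjoint2)
  also have "\<dots> \<le> (\<Sum>Y\<in>Pow (- D). block_count a D R (\<lambda>r. row_sum a r Y))"
    unfolding block_count_def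
  proof (intro sum_mono card_mono)
    fix Y assume "Y \<in> Pow (- D)"
    then have "row_sum a i (Y \<union> W) = row_sum a i Y + row_sum a i W" if "W \<subseteq> D" for i W
      using that by (intro row_sum_Un_disjoint) auto
    then show "{W \<in> Pow D. \<forall>i. row_sum a i (Y \<union> W) \<in> {0, 1}}
        \<subseteq> {W \<in> Pow D. \<forall>r\<in>R. row_sum a r Y + row_sum a r W \<in> {0, 1}}"
      by auto
  qed simp
  finally have "2 * card (zero_one_solutions a) \<le> (\<Sum>Y\<in>Pow (- D). 2 * block_count a D R (\<lambda>r. row_sum a r Y))"
    by (simp add: sum_distrib_left[symmetric])
  also have "\<dots> \<le> 2 ^ card (- D) * 2 ^ card D"
    using assms sum_bounded_above[of "Pow (- D)" "\<lambda>Y. 2 * block_count a D R (\<lambda>r. row_sum a r Y)" "2 ^ card D"]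
    by (simp add: half_block_def card_Pow)
  also have "\<dots> = 2 ^ CARD('k)"
    using card_Un_disjoint[of "- D" D] by (simp add: power_add[symmetric])
  finally show ?thesis .
qed

lemma sum_Pow_singleton: "(\<Sum>z\<in>Pow {v}. f z) = f {} + f {v}"
proof -
  have "Pow {v} = {{}, {v}}"
    by blast
  then show ?thesis
    by simp
qed

lemma sum_Pow_doubleton:
  assumes "u \<noteq> v"
  shows "(\<Sum>z\<in>Pow {u, v}. f z) = f {} + f {u} + f {v} + f {u, v}"
proof -
  have "Pow {u, v} = {{}, {u}, {v}, {u, v}}"
    by (auto simp: Pow_insert)
  moreover have "{} \<notin> {{u}, {v}, {u, v}}" "{u} \<notin> {{v}, {u, v}}" "{v} \<notin> {{u, v}}"
    using assms by auto
  ultimately show ?thesis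
    by (simp add: add.assoc)
qed

section \<open>Central binomial coefficients\<close>

definition central_binom :: "nat \<Rightarrow> nat" where
  "central_binom n = n choose (n div 2)"

lemma binomial_le_central_binom: "n choose k \<le> central_binom n"
  unfolding central_binom_def by (rule binomial_maximum)

lemma central_binom_Suc_le: "central_binom (Suc n) \<le> 2 * central_binom n"
proof (cases "Suc n div 2")
  case 0
  then show ?thesis by (simp add: central_binom_def)
next
  case (Suc k)
  then have "central_binom (Suc n) = (n choose k) + (n choose Suc k)"
    by (simp add: central_binom_def)
  also have "\<dots> \<le> 2 * central_binom n"
    using binomial_le_central_binom[of n k] binomial_le_central_binom[of n "Suc k"] by simp
  finally show ?thesis .
qed

lemma central_binom_growth:
  assumes "c * central_binom n0 \<le> d * 2 ^ n0" "n0 \<le> n"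
  shows "c * central_binom n \<le> d * 2 ^ n"
  using assms(2)
proof (induction n rule: dec_induct)
  case (step n)
  have "c * central_binom (Suc n) \<le> 2 * (c * central_binom n)"
    using central_binom_Suc_le[of n] by (simp add: mult.left_commute)
  also have "\<dots> \<le> d * 2 ^ Suc n"
    using step.IH by simp
  finally show ?case .
qed (use assms(1) in simp)

lemma central_binom_three_eighths: "3 \<le> n \<Longrightarrow> 8 * central_binom n \<le> 3 * 2 ^ n"
  by (rule central_binom_growth[of 8 3]) (simp_all add: central_binom_def)

lemma central_binom_five_sixteenths: "5 \<le> n \<Longrightarrow> 16 * central_binom n \<le> 5 * 2 ^ n"
proof (rule central_binom_growth[of 16 5])
  have "central_binom 5 = 10"
    unfolding central_binom_def by code_simp
  then show "16 * central_binom 5 \<le> 5 * 2 ^ 5"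
    by simp
qed

lemma central_binom_quarter:
  assumes "9 \<le> n"
  shows "4 * central_binom n \<le> 2 ^ n"
proof -
  have "central_binom 9 = 126"
    unfolding central_binom_def by code_simp
  then show ?thesis
    using central_binom_growth[of 4 9 1 n] assms by simp
qed

lemma central_binom_Suc_prod2_le:
  assumes "4 \<le> x" "2 \<le> y"
  shows "2 * (central_binom (Suc x) * central_binom (Suc y)) \<le> 2 ^ (x + y)"
proof -
  have "(16 * central_binom (Suc x)) * (8 * central_binom (Suc y)) \<le> (5 * 2 ^ Suc x) * (3 * 2 ^ Suc y)"
    using assms by (intro mult_mono central_binom_five_sixteenths central_binom_three_eighths) auto
  then show ?thesis
    by (simp add: power_add)
qed

lemma central_binom_Suc_prod3_le:
  assumes "2 \<le> x" "2 \<le> y" "2 \<le> z"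
  shows "2 * (central_binom (Suc x) * central_binom (Suc y) * central_binom (Suc z)) \<le> 2 ^ (x + y + z)"
proof -
  have "(8 * central_binom (Suc x)) * (8 * central_binom (Suc y)) * (8 * central_binom (Suc z))
      \<le> (3 * 2 ^ Suc x) * (3 * 2 ^ Suc y) * (3 * 2 ^ Suc z)"
    using assms by (intro mult_mono central_binom_three_eighths) auto
  then show ?thesis
    by (simp add: power_add)
qed

lemma central_binom_prod_le:
  assumes "3 \<le> t \<and> 1 \<le> s \<or> t = 2 \<and> 2 \<le> s \<or> t = 1 \<and> 3 \<le> s"
  shows "8 * (central_binom t * central_binom (Suc s)) \<le> 3 * 2 ^ (t + s)"
  using assms
proof (elim disjE conjE)
  assume "3 \<le> t" "1 \<le> s"
  then have t: "8 * central_binom t \<le> 3 * 2 ^ t"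
    by (intro central_binom_three_eighths)
  show ?thesis
  proof (cases "s = 1")
    case True
    have "central_binom 2 = 2"
      by (simp add: central_binom_def)
    then show ?thesis
      using t True by (simp add: numeral_2_eq_2)
  next
    case False
    then have "8 * central_binom (Suc s) \<le> 3 * 2 ^ Suc s"
      using \<open>1 \<le> s\<close> by (intro central_binom_three_eighths) simp
    then have "(8 * central_binom t) * (8 * central_binom (Suc s)) \<le> (3 * 2 ^ t) * (3 * 2 ^ Suc s)"
      by (rule mult_mono[OF t]) simp_all
    then show ?thesis
      by (simp add: power_add ac_simps)
  qed
next
  assume "t = 2" "2 \<le> s"
  moreover have "central_binom 2 = 2"
    by (simp add: central_binom_def)
  moreover have "8 * central_binom (Suc s) \<le> 3 * 2 ^ Suc s"
    using \<open>2 \<le> s\<close> by (intro central_binom_three_eighths) simp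
  ultimately show ?thesis
    by (simp add: power_add)
next
  assume "t = 1" "3 \<le> s"
  moreover have "central_binom 1 = 1"
    by (simp add: central_binom_def)
  moreover have "8 * central_binom (Suc s) \<le> 3 * 2 ^ Suc s"
    using \<open>3 \<le> s\<close> by (intro central_binom_three_eighths) simp
  ultimately show ?thesis
    by (simp add: power_add)
qed

lemma central_binom_two_rows_le:
  assumes "3 \<le> t \<and> 1 \<le> s \<or> t = 2 \<and> 2 \<le> s \<or> t = 1 \<and> 3 \<le> s"
  shows "2 * (central_binom (Suc (t + s)) + central_binom t * central_binom (Suc s)) \<le> 2 ^ (t + s + 1)"
proof -
  have "16 * central_binom (Suc (t + s)) \<le> 5 * 2 ^ Suc (t + s)"
    using assms by (intro central_binom_five_sixteenths) auto
  moreover have "8 * (central_binom t * central_binom (Suc s)) \<le> 3 * 2 ^ (t + s)"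
    using assms by (rule central_binom_prod_le)
  ultimately show ?thesis
    by simp
qed

section \<open>Rows with entries 1 and -1\<close>

lemma card_Pow_sym_diff:
  assumes "N \<subseteq> S"
  shows "card {z \<in> Pow S. P (sym_diff z N)} = card {w \<in> Pow S. P w}"
proof (rule bij_betw_same_card, rule bij_betw_byWitness[where f' = "\<lambda>z. sym_diff z N"])
  have flip: "sym_diff (sym_diff z N) N = z" for z
    by blast
  show "(\<lambda>z. sym_diff z N) ` {z \<in> Pow S. P (sym_diff z N)} \<subseteq> {w \<in> Pow S. P w}"
    using assms by blast
  show "(\<lambda>z. sym_diff z N) ` {w \<in> Pow S. P w} \<subseteq> {z \<in> Pow S. P (sym_diff z N)}"
  proof (rule image_subsetI)
    fix w assume "w \<in> {w \<in> Pow S. P w}"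
    then show "sym_diff w N \<in> {z \<in> Pow S. P (sym_diff z N)}"
      unfolding mem_Collect_eq Pow_iff flip using assms by blast
  qed
qed (auto simp: Un_Diff)

lemma row_sum_pm1:
  fixes a :: "'m \<Rightarrow> 'k::finite \<Rightarrow> real"
  assumes "\<And>j. j \<in> S \<Longrightarrow> a r j = 1 \<or> a r j = -1" "z \<subseteq> S"
  defines "N \<equiv> {j \<in> S. a r j = -1}"
  shows "row_sum a r z = real (card (sym_diff z N)) - real (card N)"
proof -
  have "row_sum a r z = (\<Sum>j\<in>z - N. a r j) + (\<Sum>j\<in>z \<inter> N. a r j)"
    unfolding row_sum_def by (metis add.commute finite sum.Int_Diff)
  also have "\<dots> = (\<Sum>j\<in>z - N. 1) + (\<Sum>j\<in>z \<inter> N. -1)"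
    using assms by (intro arg_cong2[where f = "(+)"] sum.cong) (auto simp: N_def)
  also have "\<dots> = real (card (z - N)) - real (card (z \<inter> N))"
    by simp
  also have "card (sym_diff z N) = card (z - N) + card (N - z)"
    by (rule card_Un_disjoint) auto
  moreover have "card N = card (N - z) + card (z \<inter> N)"
    using card_Int_Diff[of N z] by (simp add: Int_commute)
  ultimately show ?thesis
    by simp
qed

lemma card_Pow_row_sum_pm1:
  fixes a :: "'m \<Rightarrow> 'k::finite \<Rightarrow> real"
  assumes "\<And>j. j \<in> S \<Longrightarrow> a r j = 1 \<or> a r j = -1"
  shows "card {z \<in> Pow S. P (row_sum a r z)}
    = card {w \<in> Pow S. P (real (card w) - real (card {j \<in> S. a r j = -1}))}"
proof -
  let ?N = "{j \<in> S. a r j = -1}"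
  have "{z \<in> Pow S. P (row_sum a r z)} = {z \<in> Pow S. P (real (card (sym_diff z ?N)) - real (card ?N))}"
    using row_sum_pm1[of S a r] assms by auto
  also have "card \<dots> = card {w \<in> Pow S. P (real (card w) - real (card ?N))}"
    by (rule card_Pow_sym_diff) auto
  finally show ?thesis .
qed

lemma card_row_sum_level_le:
  fixes a :: "'m \<Rightarrow> 'k::finite \<Rightarrow> real"
  assumes "\<And>j. j \<in> S \<Longrightarrow> a r j = 1 \<or> a r j = -1"
  shows "card {z \<in> Pow S. row_sum a r z = y} \<le> central_binom (card S)"
proof -
  define n where "n = card {j \<in> S. a r j = -1}"
  have "card {z \<in> Pow S. row_sum a r z = y} = card {w \<in> Pow S. real (card w) - real n = y}"
    unfolding n_def by (rule card_Pow_row_sum_pm1) (use assms in blast)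
  also have "\<dots> \<le> card {w. w \<subseteq> S \<and> card w = nat \<lceil>y + real n\<rceil>}"
  proof (intro card_mono subsetI)
    fix w assume "w \<in> {w \<in> Pow S. real (card w) - real n = y}"
    then have "w \<subseteq> S" "y + real n = real (card w)"
      by auto
    then show "w \<in> {w. w \<subseteq> S \<and> card w = nat \<lceil>y + real n\<rceil>}"
      by simp
  qed simp
  also have "\<dots> \<le> central_binom (card S)"
    by (simp add: n_subsets binomial_le_central_binom)
  finally show ?thesis .
qed

lemma nat_floor_levels:
  fixes x :: real
  assumes "x + real m \<in> {0, 1}"
  shows "m = nat \<lfloor>- x\<rfloor> \<or> m = Suc (nat \<lfloor>- x\<rfloor>)"
proof (cases "x + real m = 0")
  case True
  then have "- x = of_int (int m)" by simp
  then show ?thesis by simp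
next
  case False
  with assms have "- x = of_int (int m - 1)" by simp
  then show ?thesis by (cases m) simp_all
qed

lemma row_count_le_central_binom:
  fixes a :: "'m \<Rightarrow> 'k::finite \<Rightarrow> real"
  assumes "\<And>j. j \<in> S \<Longrightarrow> a r j = 1 \<or> a r j = -1"
  shows "row_count a r S x \<le> central_binom (Suc (card S))"
proof -
  define J where "J = nat \<lfloor>- (x - real (card {j \<in> S. a r j = -1}))\<rfloor>"
  have "row_count a r S x = card {w \<in> Pow S. x + (real (card w) - real (card {j \<in> S. a r j = -1})) \<in> {0, 1}}"
    unfolding row_count_def by (rule card_Pow_row_sum_pm1) (use assms in blast)
  also have "\<dots> \<le> card ({w. w \<subseteq> S \<and> card w = J} \<union> {w. w \<subseteq> S \<and> card w = Suc J})"
  proof (intro card_mono subsetI)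
    fix w assume "w \<in> {w \<in> Pow S. x + (real (card w) - real (card {j \<in> S. a r j = -1})) \<in> {0, 1}}"
    then have "w \<subseteq> S" "(x - real (card {j \<in> S. a r j = -1})) + real (card w) \<in> {0, 1}"
      by (auto simp: algebra_simps)
    then show "w \<in> {w. w \<subseteq> S \<and> card w = J} \<union> {w. w \<subseteq> S \<and> card w = Suc J}"
      using nat_floor_levels unfolding J_def by blast
  qed simp
  also have "\<dots> \<le> (card S choose J) + (card S choose Suc J)"
    by (rule order_trans[OF card_Un_le]) (simp add: n_subsets)
  also have "\<dots> \<le> central_binom (Suc (card S))"
    using binomial_le_central_binom[of "Suc (card S)" "Suc J"] by simp
  finally show ?thesis .
qed

lemma row_count_split:
  fixes a :: "'m \<Rightarrow> 'k::finite \<Rightarrow> real"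
  assumes "T \<inter> S = {}"
  shows "(\<Sum>z\<in>Pow T. row_count a r S (x + row_sum a r z)) = row_count a r (T \<union> S) x"
proof -
  have "row_count a r (T \<union> S) x = (\<Sum>z\<in>Pow T. card {w \<in> Pow S. x + row_sum a r (z \<union> w) \<in> {0, 1}})"
    unfolding row_count_def by (rule card_Pow_Un_disjoint) (use assms in auto)
  also have "\<dots> = (\<Sum>z\<in>Pow T. row_count a r S (x + row_sum a r z))"
  proof (rule sum.cong[OF refl])
    fix z assume "z \<in> Pow T"
    then have "row_sum a r (z \<union> w) = row_sum a r z + row_sum a r w" if "w \<subseteq> S" for w
      using assms that by (intro row_sum_Un_disjoint) auto
    then show "card {w \<in> Pow S. x + row_sum a r (z \<union> w) \<in> {0, 1}} = row_count a r S (x + row_sum a r z)"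
      unfolding row_count_def by (intro arg_cong[where f = card]) (auto simp: add.assoc)
  qed
  finally show ?thesis
    by (rule sym)
qed

lemma row_count_singleton:
  "row_count a r {p} x = (if x \<in> {0, 1} then 1 else 0) + (if x + a r p \<in> {0, 1} then 1 else 0)"
proof -
  have "{W \<in> Pow {p}. x + row_sum a r W \<in> {0, 1}}
      = (if x \<in> {0, 1} then {{}} else {}) \<union> (if x + a r p \<in> {0, 1} then {{p}} else {})"
    by (auto simp: Pow_insert)
  then show ?thesis
    by (simp add: row_count_def)
qed

lemma row_count_singleton_le_2: "row_count a r {p} x \<le> 2"
  by (simp add: row_count_singleton)

lemma row_count_singleton_eq_2:
  assumes "row_count a r {p} x = 2" "a r p = 1 \<or> a r p = -1"
  shows "x = (if a r p = 1 then 0 else 1)"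
proof -
  have "x \<in> {0, 1}" "x + a r p \<in> {0, 1}"
    using assms(1) unfolding row_count_singleton by (auto split: if_splits)
  then show ?thesis
    using assms(2) by auto
qed

lemma row_count_singleton_shift:
  assumes "a r p = 1 \<or> a r p = -1" "d = 1 \<or> d = -1"
  shows "row_count a r {p} x + row_count a r {p} (x + d) \<le> 3"
  using assms by (auto simp: row_count_singleton)

lemma row_count_singleton_pair_le_5:
  assumes "a r p = 1 \<or> a r p = -1" "a s q = 1 \<or> a s q = -1" "d = 1 \<or> d = -1" "e = 1 \<or> e = -1"
  shows "row_count a r {p} x * row_count a s {q} y
    + row_count a r {p} (x + d) * row_count a s {q} (y + e) \<le> 5"
proof -
  have small: "n \<in> {0, 1, 2}" if "n \<le> 2" for n :: nat
    using that by auto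
  have "row_count a r {p} x \<in> {0, 1, 2}" "row_count a r {p} (x + d) \<in> {0, 1, 2}"
    "row_count a s {q} y \<in> {0, 1, 2}" "row_count a s {q} (y + e) \<in> {0, 1, 2}"
    by (intro small row_count_singleton_le_2)+
  moreover have "row_count a r {p} x + row_count a r {p} (x + d) \<le> 3"
    "row_count a s {q} y + row_count a s {q} (y + e) \<le> 3"
    using assms by (auto intro: row_count_singleton_shift)
  ultimately show ?thesis
    by auto
qed

lemma card_row_count_singleton_eq_2_le:
  fixes a :: "'m \<Rightarrow> 'k::finite \<Rightarrow> real"
  assumes "\<And>t. t \<in> T \<Longrightarrow> a j t = 1 \<or> a j t = -1" "a j q = 1 \<or> a j q = -1"
  shows "card {z \<in> Pow T. row_count a j {q} (x + row_sum a j z) = 2} \<le> central_binom (card T)"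
proof -
  have "{z \<in> Pow T. row_count a j {q} (x + row_sum a j z) = 2}
      \<subseteq> {z \<in> Pow T. row_sum a j z = (if a j q = 1 then 0 else 1) - x}"
    using row_count_singleton_eq_2[of a j q] assms(2) by fastforce
  then have "card {z \<in> Pow T. row_count a j {q} (x + row_sum a j z) = 2}
      \<le> card {z \<in> Pow T. row_sum a j z = (if a j q = 1 then 0 else 1) - x}"
    by (intro card_mono) auto
  also have "\<dots> \<le> central_binom (card T)"
    using assms(1) by (rule card_row_sum_level_le)
  finally show ?thesis .
qed

lemma prod_row_count_singleton_le:
  assumes "finite R" "Q \<subseteq> R" "\<And>r. r \<in> Q \<Longrightarrow> row_count a r {p r} (x r) \<le> 1"
  shows "(\<Prod>r\<in>R. row_count a r {p r} (x r)) \<le> 2 ^ (card R - card Q)"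
proof -
  have "finite Q"
    using assms(1,2) finite_subset by blast
  have "(\<Prod>r\<in>R. row_count a r {p r} (x r))
      = (\<Prod>r\<in>R - Q. row_count a r {p r} (x r)) * (\<Prod>r\<in>Q. row_count a r {p r} (x r))"
    by (rule prod.subset_diff) (use assms in auto)
  also have "\<dots> \<le> (\<Prod>r\<in>R - Q. 2) * (\<Prod>r\<in>Q. 1)"
    by (intro mult_mono prod_mono) (use assms row_count_singleton_le_2 in auto)
  also have "\<dots> = 2 ^ (card R - card Q)"
    using assms(1,2) \<open>finite Q\<close> by (simp add: card_Diff_subset)
  finally show ?thesis .
qed

(* Above half of the maximum every factor equals 2, and a row count 2 determines its offset. *)
lemma prod_row_count_singleton_le_off_peak:
  assumes "finite R" "Q \<subseteq> R"
    and unit: "\<And>r. r \<in> R \<Longrightarrow> a r (p r) = 1 \<or> a r (p r) = -1"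
    and peak: "2 ^ card R < 2 * (\<Prod>r\<in>R. row_count a r {p r} (x r))"
    and off: "\<And>r. r \<in> Q \<Longrightarrow> y r \<noteq> x r"
  shows "(\<Prod>r\<in>R. row_count a r {p r} (y r)) \<le> 2 ^ (card R - card Q)"
proof (rule prod_row_count_singleton_le[OF assms(1,2)])
  have full: "row_count a r {p r} (x r) = 2" if "r \<in> R" for r
  proof (rule ccontr)
    assume "row_count a r {p r} (x r) \<noteq> 2"
    then have "row_count a r {p r} (x r) \<le> 1"
      using row_count_singleton_le_2[of a r "p r" "x r"] by linarith
    then have "(\<Prod>r\<in>R. row_count a r {p r} (x r)) \<le> 2 ^ (card R - 1)"
      using that prod_row_count_singleton_le[OF assms(1), of "{r}"] by simp
    moreover have "card R \<noteq> 0"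
      using that assms(1) by auto
    then have "2 * 2 ^ (card R - 1) = (2::nat) ^ card R"
      by (cases "card R") simp_all
    ultimately show False
      using peak by linarith
  qed
  fix r assume "r \<in> Q"
  show "row_count a r {p r} (y r) \<le> 1"
  proof (rule ccontr)
    assume "\<not> row_count a r {p r} (y r) \<le> 1"
    then have "row_count a r {p r} (y r) = 2"
      using row_count_singleton_le_2[of a r "p r" "y r"] by linarith
    moreover have "r \<in> R"
      using \<open>r \<in> Q\<close> assms(2) by blast
    ultimately have "y r = x r"
      using full unit row_count_singleton_eq_2 by metis
    then show False
      using off \<open>r \<in> Q\<close> by blast
  qed
qed

section \<open>Blocks admitting at most half of their subsets\<close>

definition row_support :: "('m \<Rightarrow> 'k \<Rightarrow> real) \<Rightarrow> 'm \<Rightarrow> 'k set" where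
  "row_support a i = {j. a i j \<noteq> 0}"

definition col_support :: "('m \<Rightarrow> 'k \<Rightarrow> real) \<Rightarrow> 'k \<Rightarrow> 'm set" where
  "col_support a j = {i. a i j \<noteq> 0}"

lemma col_support_eq_singleton_iff:
  "col_support a w = {i} \<longleftrightarrow> a i w \<noteq> 0 \<and> (\<forall>j. j \<noteq> i \<longrightarrow> a j w = 0)"
  by (auto simp: col_support_def)

lemma block_count_singleton_row: "block_count a D {r} c = row_count a r D (c r)"
  by (simp add: block_count_def row_count_def)

lemma half_block_non_unit_entry:
  assumes "a i v \<notin> {-1, 0, 1}"
  shows "half_block a {v} {i}"
  using assms by (auto simp: half_block_def block_count_singleton_row row_count_singleton)

lemma block_count_disjoint_rows_le:
  fixes a :: "'m::finite \<Rightarrow> 'k::finite \<Rightarrow> real"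
  assumes "disjoint_family_on W R"
    and "\<And>r s j. r \<in> R \<Longrightarrow> s \<in> R \<Longrightarrow> s \<noteq> r \<Longrightarrow> j \<in> W s \<Longrightarrow> a r j = 0"
    and "\<And>r j. r \<in> R \<Longrightarrow> j \<in> W r \<Longrightarrow> a r j = 1 \<or> a r j = -1"
  shows "block_count a (\<Union>r\<in>R. W r) R c \<le> (\<Prod>r\<in>R. central_binom (Suc (card (W r))))"
proof -
  have "block_count a ({} \<union> (\<Union>r\<in>R. W r)) R c = (\<Prod>r\<in>R. row_count a r (W r) (c r))"
    using block_count_product[of W R "{}" a c] assms(1,2) by simp
  also have "\<dots> \<le> (\<Prod>r\<in>R. central_binom (Suc (card (W r))))"
    by (intro prod_mono conjI zero_le row_count_le_central_binom) (use assms(3) in auto)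
  finally show ?thesis
    by simp
qed

lemma block_count_private_singletons:
  fixes a :: "'m::finite \<Rightarrow> 'k::finite \<Rightarrow> real"
  assumes p: "\<And>r. r \<in> R \<Longrightarrow> col_support a (p r) = {r}" and "B \<inter> p ` R = {}"
  shows "block_count a (B \<union> p ` R) R c
    = (\<Sum>z\<in>Pow B. \<Prod>r\<in>R. row_count a r {p r} (c r + row_sum a r z))"
proof -
  have "disjoint_family_on (\<lambda>r. {p r}) R"
    unfolding disjoint_family_on_def
  proof (intro ballI impI)
    fix r s assume "r \<in> R" "s \<in> R" "r \<noteq> s"
    then show "{p r} \<inter> {p s} = {}"
      using p[of r] p[of s] by auto
  qed
  moreover have "a r j = 0" if "r \<in> R" "s \<in> R" "s \<noteq> r" "j \<in> {p s}" for r s j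
    using that p[of s] by (auto simp: col_support_eq_singleton_iff)
  ultimately have "block_count a (B \<union> (\<Union>r\<in>R. {p r})) R c
      = (\<Sum>z\<in>Pow B. \<Prod>r\<in>R. row_count a r {p r} (c r + row_sum a r z))"
    using assms(2) by (intro block_count_product) auto
  then show ?thesis
    by (simp add: UNION_singleton_eq_range)
qed

lemma sum_Pow_doubleton_le:
  fixes G :: "'a set \<Rightarrow> nat"
  assumes "u \<noteq> v" "2 \<le> n"
    and bound: "\<And>z. G z \<le> 2 ^ n"
    and near: "\<And>z w. z \<subseteq> {u, v} \<Longrightarrow> 2 ^ n < 2 * G z \<Longrightarrow> w \<in> {u, v} \<Longrightarrow> G (sym_diff z {w}) \<le> 2 ^ (n - 2)"
    and far: "\<And>z. z \<subseteq> {u, v} \<Longrightarrow> 2 ^ n < 2 * G z \<Longrightarrow> G (sym_diff z {u, v}) \<le> 2 ^ (n - 1)"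
  shows "(\<Sum>z\<in>Pow {u, v}. G z) \<le> 2 ^ (n + 1)"
proof (cases "\<exists>z0\<in>Pow {u, v}. 2 ^ n < 2 * G z0")
  case True
  then obtain z0 where z0: "z0 \<subseteq> {u, v}" "2 ^ n < 2 * G z0"
    by auto
  have "bij_betw (sym_diff z0) (Pow {u, v}) (Pow {u, v})"
    by (rule bij_betw_byWitness[where f' = "sym_diff z0"]) (use z0(1) in blast)+
  then have "(\<Sum>z\<in>Pow {u, v}. G z) = (\<Sum>d\<in>Pow {u, v}. G (sym_diff z0 d))"
    using sum.reindex_bij_betw[of "sym_diff z0" "Pow {u, v}" "Pow {u, v}" G] by simp
  also have "\<dots> = G z0 + G (sym_diff z0 {u}) + G (sym_diff z0 {v}) + G (sym_diff z0 {u, v})"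
    by (simp only: sum_Pow_doubleton[OF \<open>u \<noteq> v\<close>] Diff_empty empty_Diff Un_empty_right)
  also have "\<dots> \<le> 2 ^ n + 2 ^ (n - 2) + 2 ^ (n - 2) + 2 ^ (n - 1)"
  proof (intro add_mono)
    show "G (sym_diff z0 {u}) \<le> 2 ^ (n - 2)" "G (sym_diff z0 {v}) \<le> 2 ^ (n - 2)"
      by (rule near[OF z0]; simp)+
  qed (fact bound far[OF z0])+
  also have "\<dots> = 2 ^ (n + 1)"
  proof -
    obtain m where "n = 2 + m"
      using \<open>2 \<le> n\<close> le_Suc_ex by blast
    then show ?thesis
      by (simp add: power_add)
  qed
  finally show ?thesis .
next
  case False
  then have "2 * (\<Sum>z\<in>Pow {u, v}. G z) \<le> (\<Sum>z\<in>Pow {u, v}. 2 ^ n)"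
    unfolding sum_distrib_left by (intro sum_mono) (meson not_less)
  also have "\<dots> = 4 * 2 ^ n"
    using \<open>u \<noteq> v\<close> by (simp add: card_Pow)
  finally show ?thesis
    by simp
qed

lemma sum_Pow_doubleton_prod_row_count_le:
  fixes a :: "'m::finite \<Rightarrow> 'k::finite \<Rightarrow> real"
  assumes unit: "\<And>i j. a i j \<noteq> 0 \<Longrightarrow> a i j = 1 \<or> a i j = -1"
    and p: "\<And>i. col_support a (p i) = {i}"
    and "u \<noteq> v"
    and shared: "2 \<le> card (col_support a u)" "2 \<le> card (col_support a v)"
    and "col_support a u \<noteq> col_support a v"
  defines "R \<equiv> col_support a u \<union> col_support a v"
  shows "(\<Sum>z\<in>Pow {u, v}. \<Prod>r\<in>R. row_count a r {p r} (c r + row_sum a r z)) \<le> 2 ^ (card R + 1)"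
proof -
  define G where "G z = (\<Prod>r\<in>R. row_count a r {p r} (c r + row_sum a r z))" for z
  have "2 \<le> card R"
    using shared(1) card_mono[of R "col_support a u"] by (simp add: R_def)
  have off_peak: "G z' \<le> 2 ^ (card R - card Q)"
    if "Q \<subseteq> R" "2 ^ card R < 2 * G z" "\<And>r. r \<in> Q \<Longrightarrow> row_sum a r z' \<noteq> row_sum a r z" for Q z z'
    unfolding G_def using that unit p
    by (intro prod_row_count_singleton_le_off_peak) (auto simp: G_def col_support_eq_singleton_iff)
  have "(\<Sum>z\<in>Pow {u, v}. G z) \<le> 2 ^ (card R + 1)"
  proof (rule sum_Pow_doubleton_le[OF \<open>u \<noteq> v\<close> \<open>2 \<le> card R\<close>])
    show "G z \<le> 2 ^ card R" for z
      using prod_row_count_singleton_le[of R "{}"] by (simp add: G_def)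
  next
    fix z w assume z: "z \<subseteq> {u, v}" "2 ^ card R < 2 * G z" and w: "w \<in> {u, v}"
    have "col_support a w \<subseteq> R" "2 \<le> card (col_support a w)"
      using w shared by (auto simp: R_def)
    moreover have "row_sum a r (sym_diff z {w}) \<noteq> row_sum a r z" if "r \<in> col_support a w" for r
      using that by (simp add: row_sum_sym_diff col_support_def)
    ultimately have "G (sym_diff z {w}) \<le> 2 ^ (card R - card (col_support a w))"
      using off_peak z(2) by blast
    also have "\<dots> \<le> 2 ^ (card R - 2)"
      using \<open>2 \<le> card (col_support a w)\<close> by (intro power_increasing) auto
    finally show "G (sym_diff z {w}) \<le> 2 ^ (card R - 2)" .
  next
    fix z assume z: "z \<subseteq> {u, v}" "2 ^ card R < 2 * G z"
    obtain r0 where r0: "r0 \<in> R" "(a r0 u \<noteq> 0) \<noteq> (a r0 v \<noteq> 0)"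
      using \<open>col_support a u \<noteq> col_support a v\<close> unfolding R_def col_support_def by auto
    then have "row_sum a r0 (sym_diff z {u, v}) \<noteq> row_sum a r0 z"
      using \<open>u \<noteq> v\<close> unit[of r0 u] unit[of r0 v] by (auto simp: row_sum_sym_diff)
    then show "G (sym_diff z {u, v}) \<le> 2 ^ (card R - 1)"
      using off_peak[of "{r0}" z "sym_diff z {u, v}"] r0(1) z(2) by simp
  qed
  then show ?thesis
    by (simp add: G_def)
qed

lemma half_block_two_shared_columns:
  fixes a :: "'m::finite \<Rightarrow> 'k::finite \<Rightarrow> real"
  assumes unit: "\<And>i j. a i j \<noteq> 0 \<Longrightarrow> a i j = 1 \<or> a i j = -1"
    and p: "\<And>i. col_support a (p i) = {i}"
    and "u \<noteq> v"
    and shared: "2 \<le> card (col_support a u)" "2 \<le> card (col_support a v)"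
    and "col_support a u \<noteq> col_support a v"
  defines "R \<equiv> col_support a u \<union> col_support a v"
  shows "half_block a ({u, v} \<union> p ` R) R"
  unfolding half_block_def
proof
  fix c
  have p_notin: "p r \<notin> {u, v}" for r
    using shared p[of r] by auto
  have "inj p"
    using p by (metis injI singleton_inject)
  have "block_count a ({u, v} \<union> p ` R) R c
      = (\<Sum>z\<in>Pow {u, v}. \<Prod>r\<in>R. row_count a r {p r} (c r + row_sum a r z))"
    using p p_notin by (intro block_count_private_singletons) auto
  also have "\<dots> \<le> 2 ^ (card R + 1)"
    unfolding R_def using unit p \<open>u \<noteq> v\<close> shared \<open>col_support a u \<noteq> col_support a v\<close>
    by (rule sum_Pow_doubleton_prod_row_count_le)
  moreover have "card ({u, v} \<union> p ` R) = card R + 2"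
    using p_notin \<open>u \<noteq> v\<close> \<open>inj p\<close>
    by (subst card_Un_disjoint) (auto simp: card_image inj_on_subset[of p UNIV])
  ultimately show "2 * block_count a ({u, v} \<union> p ` R) R c \<le> 2 ^ card ({u, v} \<union> p ` R)"
    by simp
qed

lemma block_count_two_private_singletons_le:
  fixes a :: "'m::finite \<Rightarrow> 'k::finite \<Rightarrow> real"
  assumes rows: "i \<noteq> j" "i \<noteq> l" "j \<noteq> l"
    and v: "a j v = 1 \<or> a j v = -1" "a l v = 1 \<or> a l v = -1"
    and q1: "a j q1 = 1 \<or> a j q1 = -1" "a i q1 = 0" "a l q1 = 0"
    and q2: "a l q2 = 1 \<or> a l q2 = -1" "a i q2 = 0" "a j q2 = 0"
    and W: "\<And>w. w \<in> W \<Longrightarrow> a i w = 1 \<or> a i w = -1" "\<And>w. w \<in> W \<Longrightarrow> a j w = 0"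
      "\<And>w. w \<in> W \<Longrightarrow> a l w = 0"
    and distinct: "q1 \<noteq> q2" "q1 \<notin> W" "q2 \<notin> W" "v \<notin> W" "v \<noteq> q1" "v \<noteq> q2"
  shows "block_count a ({v} \<union> (W \<union> {q1, q2})) {i, j, l} c \<le> 5 * central_binom (Suc (card W))"
proof -
  define B where "B r = (if r = i then W else if r = j then {q1} else {q2})" for r
  define N where "N r z = row_count a r (B r) (c r + row_sum a r z)" for r z
  have B: "B i = W" "B j = {q1}" "B l = {q2}"
    using rows by (auto simp: B_def)
  have "block_count a ({v} \<union> (\<Union>r\<in>{i, j, l}. B r)) {i, j, l} c = (\<Sum>z\<in>Pow {v}. \<Prod>r\<in>{i, j, l}. N r z)"
    unfolding N_def using B distinct q1 q2 W
    by (intro block_count_product) (auto simp: disjoint_family_on_def)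
  also have "\<dots> = N i {} * (N j {} * N l {}) + N i {v} * (N j {v} * N l {v})"
    using rows by (simp add: sum_Pow_singleton)
  also have "\<dots> \<le> central_binom (Suc (card W)) * (N j {} * N l {} + N j {v} * N l {v})"
  proof -
    have "N i z \<le> central_binom (Suc (card W))" for z
      unfolding N_def B using W(1) by (rule row_count_le_central_binom)
    then show ?thesis
      by (simp add: distrib_left add_mono mult_right_mono)
  qed
  also have "\<dots> \<le> central_binom (Suc (card W)) * 5"
    unfolding N_def B using row_count_singleton_pair_le_5[of a j q1 l q2 "a j v" "a l v", OF q1(1) q2(1) v]
    by simp
  finally show ?thesis
    using B by (simp add: insert_commute mult.commute)
qed

lemma half_block_two_private_singletons:
  fixes a :: "'m::finite \<Rightarrow> 'k::finite \<Rightarrow> real"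
  assumes unit: "\<And>r j. a r j \<noteq> 0 \<Longrightarrow> a r j = 1 \<or> a r j = -1"
    and rows: "i \<noteq> j" "i \<noteq> l" "j \<noteq> l"
    and v: "a j v \<noteq> 0" "a l v \<noteq> 0"
    and q: "col_support a q1 = {j}" "col_support a q2 = {l}"
    and W: "\<And>w. w \<in> W \<Longrightarrow> col_support a w = {i}"
    and "2 \<le> card W"
  shows "half_block a ({v} \<union> (W \<union> {q1, q2})) {i, j, l}"
  unfolding half_block_def
proof
  fix c
  have W': "a i w \<noteq> 0" "a j w = 0" "a l w = 0" if "w \<in> W" for w
    using W[OF that] rows by (auto simp: col_support_eq_singleton_iff)
  have q': "a j q1 \<noteq> 0" "a i q1 = 0" "a l q1 = 0" "a l q2 \<noteq> 0" "a i q2 = 0" "a j q2 = 0"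
    using q rows by (auto simp: col_support_eq_singleton_iff)
  have distinct: "q1 \<noteq> q2" "q1 \<notin> W" "q2 \<notin> W" "v \<notin> W" "v \<noteq> q1" "v \<noteq> q2"
    using q' W' v by fastforce+
  have "block_count a ({v} \<union> (W \<union> {q1, q2})) {i, j, l} c \<le> 5 * central_binom (Suc (card W))"
    using rows v q' W' distinct unit by (intro block_count_two_private_singletons_le) auto
  then have "2 * block_count a ({v} \<union> (W \<union> {q1, q2})) {i, j, l} c \<le> 10 * central_binom (Suc (card W))"
    by simp
  also have "\<dots> \<le> 2 ^ (card W + 3)"
    using central_binom_three_eighths[of "Suc (card W)"] \<open>2 \<le> card W\<close> by (simp add: power_add)
  also have "card W + 3 = card ({v} \<union> (W \<union> {q1, q2}))"
    using distinct by (simp add: card_insert_if)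
  finally show "2 * block_count a ({v} \<union> (W \<union> {q1, q2})) {i, j, l} c \<le> 2 ^ card ({v} \<union> (W \<union> {q1, q2}))" .
qed

lemma sum_mult_le_sum_add_sum:
  fixes f g :: "'a \<Rightarrow> nat"
  assumes "finite A" "Z \<subseteq> A" "\<And>z. z \<in> A \<Longrightarrow> g z \<le> (if z \<in> Z then 2 else 1)"
  shows "(\<Sum>z\<in>A. f z * g z) \<le> (\<Sum>z\<in>A. f z) + (\<Sum>z\<in>Z. f z)"
proof -
  have "(\<Sum>z\<in>A. f z * g z) \<le> (\<Sum>z\<in>A. f z + (if z \<in> Z then f z else 0))"
  proof (rule sum_mono)
    fix z assume "z \<in> A"
    then have "f z * g z \<le> f z * (if z \<in> Z then 2 else 1)"
      by (rule mult_left_mono[OF assms(3)]) simp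
    also have "\<dots> = f z + (if z \<in> Z then f z else 0)"
      by simp
    finally show "f z * g z \<le> f z + (if z \<in> Z then f z else 0)" .
  qed
  also have "\<dots> = (\<Sum>z\<in>A. f z) + (\<Sum>z\<in>A \<inter> Z. f z)"
    using assms(1) by (simp add: sum.distrib sum.inter_restrict)
  also have "A \<inter> Z = Z"
    using assms(2) by blast
  finally show ?thesis .
qed

(* The private column q doubles the count of row j only on a level set of row j inside T. *)
lemma block_count_two_rows_le:
  fixes a :: "'m::finite \<Rightarrow> 'k::finite \<Rightarrow> real"
  assumes "i \<noteq> j"
    and T: "\<And>t. t \<in> T \<Longrightarrow> a i t = 1 \<or> a i t = -1" "\<And>t. t \<in> T \<Longrightarrow> a j t = 1 \<or> a j t = -1"
    and S: "\<And>w. w \<in> S \<Longrightarrow> a i w = 1 \<or> a i w = -1" "\<And>w. w \<in> S \<Longrightarrow> a j w = 0"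
    and q: "a j q = 1 \<or> a j q = -1" "a i q = 0"
    and distinct: "T \<inter> S = {}" "q \<notin> T" "q \<notin> S"
  shows "block_count a (T \<union> (S \<union> {q})) {i, j} c
    \<le> central_binom (Suc (card T + card S)) + central_binom (card T) * central_binom (Suc (card S))"
proof -
  define B where "B r = (if r = i then S else {q})" for r
  define Ni where "Ni z = row_count a i S (c i + row_sum a i z)" for z
  define Z where "Z = {z \<in> Pow T. row_count a j {q} (c j + row_sum a j z) = 2}"
  have B: "B i = S" "B j = {q}"
    using \<open>i \<noteq> j\<close> by (auto simp: B_def)
  have "block_count a (T \<union> (\<Union>r\<in>{i, j}. B r)) {i, j} c
      = (\<Sum>z\<in>Pow T. Ni z * row_count a j {q} (c j + row_sum a j z))"
    unfolding Ni_def using B distinct S(2) q(2) \<open>i \<noteq> j\<close>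
    by (subst block_count_product) (auto simp: disjoint_family_on_def)
  also have "\<dots> \<le> (\<Sum>z\<in>Pow T. Ni z) + (\<Sum>z\<in>Z. Ni z)"
  proof (rule sum_mult_le_sum_add_sum)
    show "row_count a j {q} (c j + row_sum a j z) \<le> (if z \<in> Z then 2 else 1)" if "z \<in> Pow T" for z
      using that row_count_singleton_le_2[of a j q "c j + row_sum a j z"] by (auto simp: Z_def)
  qed (auto simp: Z_def)
  also have "(\<Sum>z\<in>Pow T. Ni z) = row_count a i (T \<union> S) (c i)"
    unfolding Ni_def by (rule row_count_split[OF distinct(1)])
  also have "\<dots> \<le> central_binom (Suc (card T + card S))"
    using row_count_le_central_binom[of "T \<union> S" a i] T(1) S(1) distinct(1)
    by (auto simp: card_Un_disjoint)
  also have "(\<Sum>z\<in>Z. Ni z) \<le> card Z * central_binom (Suc (card S))"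
    using sum_bounded_above[of Z Ni] row_count_le_central_binom[of S a i] S(1) by (simp add: Ni_def)
  also have "card Z \<le> central_binom (card T)"
    unfolding Z_def using T(2) q(1) by (rule card_row_count_singleton_eq_2_le)
  finally show ?thesis
    using B by (simp add: mult_right_mono)
qed

lemma half_block_two_rows:
  fixes a :: "'m::finite \<Rightarrow> 'k::finite \<Rightarrow> real"
  assumes unit: "\<And>r j. a r j \<noteq> 0 \<Longrightarrow> a r j = 1 \<or> a r j = -1"
    and "i \<noteq> j"
    and T: "\<And>t. t \<in> T \<Longrightarrow> a i t \<noteq> 0 \<and> a j t \<noteq> 0"
    and S: "\<And>w. w \<in> S \<Longrightarrow> col_support a w = {i}"
    and q: "col_support a q = {j}"
    and sizes: "3 \<le> card T \<and> 1 \<le> card S \<or> card T = 2 \<and> 2 \<le> card S \<or> card T = 1 \<and> 3 \<le> card S"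
  shows "half_block a (T \<union> (S \<union> {q})) {i, j}"
  unfolding half_block_def
proof
  fix c
  have S': "a i w \<noteq> 0" "a j w = 0" if "w \<in> S" for w
    using S[OF that] \<open>i \<noteq> j\<close> by (auto simp: col_support_eq_singleton_iff)
  have q': "a j q \<noteq> 0" "a i q = 0"
    using q \<open>i \<noteq> j\<close> by (auto simp: col_support_eq_singleton_iff)
  have distinct: "T \<inter> S = {}" "q \<notin> T" "q \<notin> S"
    using T S' q' by fastforce+
  have "block_count a (T \<union> (S \<union> {q})) {i, j} c
      \<le> central_binom (Suc (card T + card S)) + central_binom (card T) * central_binom (Suc (card S))"
    using \<open>i \<noteq> j\<close> T S' q' distinct unit by (intro block_count_two_rows_le) auto
  then have "2 * block_count a (T \<union> (S \<union> {q})) {i, j} c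
      \<le> 2 * (central_binom (Suc (card T + card S)) + central_binom (card T) * central_binom (Suc (card S)))"
    by (rule mult_le_mono2)
  also have "\<dots> \<le> 2 ^ (card T + card S + 1)"
    by (rule central_binom_two_rows_le[OF sizes])
  finally have "2 * block_count a (T \<union> (S \<union> {q})) {i, j} c \<le> 2 ^ (card T + card S + 1)" .
  moreover have "card (T \<union> (S \<union> {q})) = card T + card S + 1"
    using distinct by (simp add: card_Un_disjoint)
  ultimately show "2 * block_count a (T \<union> (S \<union> {q})) {i, j} c \<le> 2 ^ card (T \<union> (S \<union> {q}))"
    by simp
qed

section \<open>Matrices without such blocks\<close>

(* no_half_block is how the hypothesis t(L) > 2^(k-1) enters, via card_zero_one_solutions_le_half. *)
locale tight_matrix =
  fixes a :: "'m::finite \<Rightarrow> 'k::finite \<Rightarrow> real" and p :: "'m \<Rightarrow> 'k"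
  assumes card_row_support: "\<And>i. 2 \<le> card (row_support a i)"
    and col_support_p: "\<And>i. col_support a (p i) = {i}"
    and col_support_nonempty: "\<And>v. col_support a v \<noteq> {}"
    and card_ge_8: "8 \<le> CARD('k)"
    and no_half_block: "\<And>D R. \<not> half_block a D R"
begin

lemma unit_entry: "a i j \<noteq> 0 \<Longrightarrow> a i j = 1 \<or> a i j = -1"
  using no_half_block half_block_non_unit_entry by fastforce

lemma cover_rows: "\<exists>i. v \<in> row_support a i"
  using col_support_nonempty[of v] by (auto simp: row_support_def col_support_def)

definition shared_columns :: "'k set" where
  "shared_columns = {v. 2 \<le> card (col_support a v)}"

lemma p_not_shared: "p i \<notin> shared_columns"
  by (simp add: shared_columns_def col_support_p)

lemma col_support_unshared:
  assumes "v \<notin> shared_columns" "i \<in> col_support a v"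
  shows "col_support a v = {i}"
proof -
  have "card (col_support a v) \<le> 1"
    using assms(1) by (simp add: shared_columns_def)
  then show ?thesis
    using assms(2) card_le_Suc0_iff_eq[of "col_support a v"] by auto
qed

lemma disjoint_rows_central_binom_gt:
  assumes "shared_columns = {}" "R \<noteq> {}"
  shows "2 ^ (\<Sum>r\<in>R. card (row_support a r)) < 2 * (\<Prod>r\<in>R. central_binom (Suc (card (row_support a r))))"
proof -
  have vanish: "a r j = 0" if "s \<noteq> r" "j \<in> row_support a s" for r s j
    using col_support_unshared[of j s] that assms(1) by (auto simp: col_support_def row_support_def)
  then have "disjoint_family_on (row_support a) R"
    by (fastforce simp: disjoint_family_on_def row_support_def)
  then have "card (\<Union>r\<in>R. row_support a r) = (\<Sum>r\<in>R. card (row_support a r))"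
    by (simp add: card_UN_disjoint disjoint_family_on_def)
  moreover have "block_count a (\<Union>r\<in>R. row_support a r) R c
      \<le> (\<Prod>r\<in>R. central_binom (Suc (card (row_support a r))))" for c
    using vanish unit_entry
    by (intro block_count_disjoint_rows_le[OF \<open>disjoint_family_on (row_support a) R\<close>])
      (auto simp: row_support_def)
  ultimately show ?thesis
    using no_half_block[of "\<Union>r\<in>R. row_support a r" R] unfolding half_block_def
    by (metis (no_types, lifting) dual_order.trans mult_le_mono2 not_le)
qed

lemma three_rows_if_no_shared_columns:
  assumes none: "shared_columns = {}"
  shows "\<exists>i j l :: 'm. i \<noteq> j \<and> i \<noteq> l \<and> j \<noteq> l"
proof (rule ccontr)
  assume "\<not> ?thesis"
  then obtain i j :: 'm where rows: "\<And>r. r = i \<or> r = j"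
    by (metis (full_types))
  have "v \<in> row_support a i \<union> row_support a j" for v
  proof -
    obtain r where "v \<in> row_support a r"
      using cover_rows by blast
    then show ?thesis
      using rows[of r] by blast
  qed
  then have UNIV_eq: "UNIV = row_support a i \<union> row_support a j"
    by blast
  show False
  proof (cases "i = j")
    case True
    then show False
      using UNIV_eq disjoint_rows_central_binom_gt[OF none, of "{i}"] central_binom_quarter[of "Suc CARD('k)"] card_ge_8
      by simp
  next
    case False
    have "card (UNIV :: 'k set) \<le> card (row_support a i) + card (row_support a j)"
      unfolding UNIV_eq by (rule card_Un_le)
    then have "4 \<le> card (row_support a i) \<or> 4 \<le> card (row_support a j)"
      using card_ge_8 by linarith
    then show False
      using disjoint_rows_central_binom_gt[OF none, of "{i, j}"] False card_row_support
        central_binom_Suc_prod2_le[of "card (row_support a i)" "card (row_support a j)"]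
        central_binom_Suc_prod2_le[of "card (row_support a j)" "card (row_support a i)"]
      by (auto simp: ac_simps)
  qed
qed

lemma shared_columns_nonempty: "shared_columns \<noteq> {}"
proof
  assume none: "shared_columns = {}"
  then obtain i j l :: 'm where rows: "i \<noteq> j" "i \<noteq> l" "j \<noteq> l"
    using three_rows_if_no_shared_columns by blast
  show False
    using disjoint_rows_central_binom_gt[OF none, of "{i, j, l}"] rows
      central_binom_Suc_prod3_le[OF card_row_support card_row_support card_row_support, of i j l]
    by (simp add: mult.assoc add.assoc)
qed

lemma col_support_shared_eq:
  assumes "u \<in> shared_columns" "v \<in> shared_columns"
  shows "col_support a u = col_support a v"
proof (rule ccontr)
  assume neq: "col_support a u \<noteq> col_support a v"
  then have "half_block a ({u, v} \<union> p ` (col_support a u \<union> col_support a v)) (col_support a u \<union> col_support a v)"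
    using assms unit_entry col_support_p
    by (intro half_block_two_shared_columns) (auto simp: shared_columns_def)
  with no_half_block show False
    by blast
qed

lemma col_support_shared:
  assumes "v \<in> shared_columns"
  shows "col_support a v = UNIV"
proof (rule ccontr)
  assume "col_support a v \<noteq> UNIV"
  then obtain j where j: "a j v = 0"
    by (auto simp: col_support_def)
  obtain i i' where ii': "i \<in> col_support a v" "i' \<in> col_support a v" "i \<noteq> i'"
    using assms card_le_Suc0_iff_eq[of "col_support a v"] by (force simp: shared_columns_def)
  have "i \<noteq> j" "i' \<noteq> j"
    using ii' j by (auto simp: col_support_def)
  have "col_support a w = {j}" if "w \<in> row_support a j" for w
  proof (rule col_support_unshared)
    show "j \<in> col_support a w"
      using that by (simp add: row_support_def col_support_def)
    then show "w \<notin> shared_columns"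
      using col_support_shared_eq[OF _ assms, of w] j by (auto simp: col_support_def)
  qed
  then have "half_block a ({v} \<union> (row_support a j \<union> {p i, p i'})) {j, i, i'}"
    using \<open>i \<noteq> j\<close> \<open>i' \<noteq> j\<close> ii' unit_entry col_support_p card_row_support
    by (intro half_block_two_private_singletons) (auto simp: col_support_def)
  with no_half_block show False
    by blast
qed

definition private_part :: "'m \<Rightarrow> 'k set" where
  "private_part i = row_support a i - shared_columns"

lemma row_support_eq: "row_support a i = shared_columns \<union> private_part i"
  using col_support_shared by (auto simp: private_part_def row_support_def col_support_def)

lemma p_in_private_part: "p i \<in> private_part i"
  using col_support_p[of i] p_not_shared by (auto simp: private_part_def row_support_def col_support_def)

lemma col_support_private_part: "w \<in> private_part i \<Longrightarrow> col_support a w = {i}"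
  by (rule col_support_unshared) (auto simp: private_part_def row_support_def col_support_def)

lemma card_private_part_ge_1: "1 \<le> card (private_part i)"
  using p_in_private_part card_0_eq[of "private_part i"] by fastforce

lemma shared_private_sizes_excluded:
  assumes "i \<noteq> j"
  shows "\<not> (3 \<le> card shared_columns \<and> 1 \<le> card (private_part i)
    \<or> card shared_columns = 2 \<and> 2 \<le> card (private_part i)
    \<or> card shared_columns = 1 \<and> 3 \<le> card (private_part i))"
proof
  assume sizes: "3 \<le> card shared_columns \<and> 1 \<le> card (private_part i)
    \<or> card shared_columns = 2 \<and> 2 \<le> card (private_part i)
    \<or> card shared_columns = 1 \<and> 3 \<le> card (private_part i)"
  have "a i t \<noteq> 0 \<and> a j t \<noteq> 0" if "t \<in> shared_columns" for t
    using col_support_shared[OF that] by (auto simp: col_support_def)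
  then have "half_block a (shared_columns \<union> (private_part i \<union> {p j})) {i, j}"
    using unit_entry assms col_support_private_part col_support_p sizes by (intro half_block_two_rows)
  with no_half_block show False
    by blast
qed

lemma exists_other_row: "\<exists>j. j \<noteq> (i :: 'm)"
proof -
  obtain v where "v \<in> shared_columns"
    using shared_columns_nonempty by blast
  then obtain i1 i2 :: 'm where "i1 \<noteq> i2"
    using card_le_Suc0_iff_eq[of "col_support a v"] by (force simp: shared_columns_def)
  then show ?thesis
    by metis
qed

lemma card_shared_columns_private_part:
  "card shared_columns = 1 \<and> card (private_part i) \<le> 2 \<or> card shared_columns = 2 \<and> card (private_part i) = 1"
proof -
  obtain j where "j \<noteq> i"
    using exists_other_row by blast
  have "1 \<le> card shared_columns"
    using shared_columns_nonempty card_0_eq[of shared_columns] by fastforce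
  then show ?thesis
    using shared_private_sizes_excluded[OF \<open>j \<noteq> i\<close>[symmetric]] card_private_part_ge_1[of i] by linarith
qed

lemma exists_third_row:
  fixes i j :: 'm
  assumes "card shared_columns = 1"
  shows "\<exists>l. l \<noteq> i \<and> l \<noteq> j"
proof (rule ccontr)
  assume two_rows: "\<nexists>l. l \<noteq> i \<and> l \<noteq> j"
  have "w \<in> shared_columns \<union> private_part i \<union> private_part j" for w
  proof -
    obtain r where "w \<in> row_support a r"
      using cover_rows by blast
    moreover have "r = i \<or> r = j"
      using two_rows by blast
    ultimately show ?thesis
      using row_support_eq by auto
  qed
  then have "CARD('k) \<le> card (shared_columns \<union> private_part i \<union> private_part j)"
    by (intro card_mono) auto
  also have "\<dots> \<le> card shared_columns + card (private_part i) + card (private_part j)"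
    using card_Un_le[of "shared_columns \<union> private_part i" "private_part j"]
      card_Un_le[of shared_columns "private_part i"] by linarith
  finally show False
    using assms card_shared_columns_private_part[of i] card_shared_columns_private_part[of j] card_ge_8
    by linarith
qed

lemma private_part_eq: "private_part i = {p i}"
proof -
  have "card (private_part i) = 1"
  proof (rule ccontr)
    assume "card (private_part i) \<noteq> 1"
    then have sizes: "card shared_columns = 1" "card (private_part i) = 2"
      using card_shared_columns_private_part[of i] card_private_part_ge_1[of i] by auto
    then obtain v where v: "shared_columns = {v}"
      using card_1_singletonE by blast
    obtain j where "j \<noteq> i"
      using exists_other_row by blast
    obtain l where "l \<noteq> i" "l \<noteq> j"
      using exists_third_row[OF sizes(1)] by blast
    have "a r v \<noteq> 0" for r
      using col_support_shared[of v] v by (auto simp: col_support_def)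
    then have "half_block a ({v} \<union> (private_part i \<union> {p j, p l})) {i, j, l}"
      using \<open>j \<noteq> i\<close> \<open>l \<noteq> i\<close> \<open>l \<noteq> j\<close> unit_entry col_support_p col_support_private_part sizes(2)
      by (intro half_block_two_private_singletons) auto
    with no_half_block show False
      by blast
  qed
  then show ?thesis
    using p_in_private_part[of i] by (metis card_1_singletonE singletonD)
qed

lemma range_row_support: "range (row_support a) = (\<lambda>v. insert v shared_columns) ` (- shared_columns)"
proof -
  have row_support_p: "row_support a i = insert (p i) shared_columns" for i
    using row_support_eq private_part_eq by simp
  have "v \<in> range p" if "v \<notin> shared_columns" for v
    using cover_rows[of v] that row_support_p by auto
  then show ?thesis
    using row_support_p p_not_shared by (auto simp: image_iff)
qed

theorem row_support_star: "star21 UNIV (range (row_support a)) \<or> star32 UNIV (range (row_support a))"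
proof -
  have "card shared_columns = 1 \<or> card shared_columns = 2"
    using card_shared_columns_private_part by blast
  then show ?thesis
  proof
    assume "card shared_columns = 1"
    then obtain c where "shared_columns = {c}"
      using card_1_singletonE by blast
    then have "star21 UNIV (range (row_support a))"
      unfolding star21_def range_row_support by (auto simp: insert_commute)
    then show ?thesis ..
  next
    assume "card shared_columns = 2"
    then obtain c1 c2 where "shared_columns = {c1, c2}" "c1 \<noteq> c2"
      by (meson card_2_iff)
    then have "star32 UNIV (range (row_support a))"
      unfolding star32_def range_row_support by (auto simp: insert_commute)
    then show ?thesis ..
  qed
qed

end

section \<open>From linear maps to matrices\<close>

definition coeff_matrix :: "(real^'k \<Rightarrow> real^'m) \<Rightarrow> 'm \<Rightarrow> 'k \<Rightarrow> real" where
  "coeff_matrix L i j = L (axis j 1) $ i"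

lemma supp_scalar_coord: "supp_scalar (coord L i) = row_support (coeff_matrix L) i"
  by (simp add: supp_scalar_def coord_def row_support_def coeff_matrix_def)

lemma supp_map_eq: "supp_map L = {j. col_support (coeff_matrix L) j \<noteq> {}}"
  by (auto simp: supp_map_def col_support_def coeff_matrix_def vec_eq_iff)

lemma linear_apply_indicator_vec:
  fixes L :: "real^'k::finite \<Rightarrow> real^'m::finite"
  assumes "linear L"
  shows "L (\<chi> j. if j \<in> X then 1 else 0) $ i = row_sum (coeff_matrix L) i X"
proof -
  have "(\<chi> j. if j \<in> X then 1 else 0) = (\<Sum>j\<in>X. axis j (1::real))"
    by (simp add: vec_eq_iff axis_def)
  then have "L (\<chi> j. if j \<in> X then 1 else 0) = (\<Sum>j\<in>X. L (axis j 1))"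
    by (simp add: linear_sum[OF assms])
  then show ?thesis
    by (simp add: row_sum_def coeff_matrix_def sum_component)
qed

lemma t_map_eq_card_zero_one_solutions:
  fixes L :: "real^'k::finite \<Rightarrow> real^'m::finite"
  assumes "linear L"
  shows "t_map L = card (zero_one_solutions (coeff_matrix L))"
proof -
  let ?vec = "\<lambda>X. \<chi> j. if j \<in> X then 1 else (0::real)"
  have "inj ?vec"
    by (rule injI) (metis (mono_tags, lifting) vec_lambda_inverse UNIV_I zero_neq_one subsetI subset_antisym)
  have "I_map L = ?vec ` zero_one_solutions (coeff_matrix L)"
  proof
    show "?vec ` zero_one_solutions (coeff_matrix L) \<subseteq> I_map L"
      using linear_apply_indicator_vec[OF assms]
      by (auto simp: I_map_def Hcube_def zero_one_solutions_def)
    show "I_map L \<subseteq> ?vec ` zero_one_solutions (coeff_matrix L)"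
    proof
      fix x assume x: "x \<in> I_map L"
      then have "x = ?vec {j. x $ j = 1}"
        by (auto simp: vec_eq_iff I_map_def Hcube_def)
      moreover have "{j. x $ j = 1} \<in> zero_one_solutions (coeff_matrix L)"
        using x linear_apply_indicator_vec[OF assms, of "{j. x $ j = 1}"] \<open>x = _\<close>
        by (auto simp: I_map_def Hcube_def zero_one_solutions_def)
      ultimately show "x \<in> ?vec ` zero_one_solutions (coeff_matrix L)"
        by blast
    qed
  qed
  moreover have "inj_on ?vec (zero_one_solutions (coeff_matrix L))"
    using \<open>inj ?vec\<close> by (rule inj_on_subset) simp
  ultimately show ?thesis
    unfolding t_map_def by (simp add: card_image)
qed

lemma minimal_map_private_columns:
  assumes "minimal_map L"
  obtains p where "\<And>i. col_support (coeff_matrix L) (p i) = {i}"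
proof -
  have "\<exists>q. col_support (coeff_matrix L) q = {i}" for i
  proof -
    have "\<not> supp_scalar (coord L i) \<subseteq> (\<Union>j\<in>{j. j \<noteq> i}. supp_scalar (coord L j))"
      using assms unfolding minimal_map_def by blast
    then have "\<not> row_support (coeff_matrix L) i \<subseteq> (\<Union>j\<in>{j. j \<noteq> i}. row_support (coeff_matrix L) j)"
      unfolding supp_scalar_coord .
    then obtain q where "coeff_matrix L i q \<noteq> 0" "\<forall>j. j \<noteq> i \<longrightarrow> coeff_matrix L j q = 0"
      by (auto simp: row_support_def)
    then show ?thesis
      by (auto simp: col_support_eq_singleton_iff)
  qed
  then show ?thesis
    using that by metis
qed

lemma no_half_block_if_t_map_gt:
  fixes L :: "real^'k::finite \<Rightarrow> real^'m::finite"
  assumes "linear L" "t_map L > 2 ^ (CARD('k) - 1)"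
  shows "\<not> half_block (coeff_matrix L) D R"
proof
  assume "half_block (coeff_matrix L) D R"
  then have "2 * t_map L \<le> 2 ^ CARD('k)"
    unfolding t_map_eq_card_zero_one_solutions[OF assms(1)] by (rule card_zero_one_solutions_le_half)
  moreover have "CARD('k) = Suc (CARD('k) - 1)"
    using finite_UNIV_card_ge_0[where 'a = 'k] by simp
  then have "(2::nat) ^ CARD('k) = 2 * 2 ^ (CARD('k) - 1)"
    by (metis power_Suc)
  ultimately show False
    using assms(2) by linarith
qed

theorem lemma3p5:
  fixes L :: "real^'k \<Rightarrow> real^'m"
  assumes "linear L"
    and "minimal_map L"
    and "\<forall>i. card (supp_scalar (coord L i)) > 1"
    and "card (supp_map L) = CARD('k)"
    and "CARD('k) \<ge> 8"
    and "t_map L > 2 ^ (CARD('k) - 1)"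
  shows "star21 (UNIV :: 'k set) (shape_edges L) \<or> star32 (UNIV :: 'k set) (shape_edges L)"
proof -
  have "2 \<le> card (row_support (coeff_matrix L) i)" for i
    using assms(3) by (simp add: supp_scalar_coord Suc_le_eq numeral_2_eq_2)
  moreover obtain p where "\<And>i. col_support (coeff_matrix L) (p i) = {i}"
    using minimal_map_private_columns[OF assms(2)] by blast
  moreover have "col_support (coeff_matrix L) v \<noteq> {}" for v
    using assms(4) card_eq_UNIV_imp_eq_UNIV[of "supp_map L"] by (auto simp: supp_map_eq)
  ultimately have "tight_matrix (coeff_matrix L) p"
    using assms(5) no_half_block_if_t_map_gt[OF assms(1,6)] by (rule tight_matrix.intro)
  then show ?thesis
    unfolding shape_edges_def supp_scalar_coord by (rule tight_matrix.row_support_star)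
qed

end
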